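(* Let $\mathcal{H}$ be an $n$-dimensional (real or complex) Hilbert space, let $F=\{f_i\}_{i=1}^N$ be a tight frame for $\mathcal{H}$, and let $\{q_i\}_{i=1}^N$ be the weight number sequence associated with a probability sequence $\{p_i\}_{i=1}^N$. Then the canonical dual $S_F^{-1}F$ is a 1-erasure probabilistic spectrally optimal dual (PSOD) of $F$ if and only if $S_F^{-1}F\in\Delta_F^{(1)}$.
   Context: A finite sequence $F=\{f_i\}_{i=1}^N$ in $\mathcal{H}$ is a frame if there are $A,B>0$ with $A\|f\|^2\le\sum_{i=1}^N|\langle f,f_i\rangle|^2\le B\|f\|^2$ for all $f$; it is tight if one can take $A=B$. The frame operator is $S_Ff=\sum_{i=1}^N\langle f,f_i\rangle f_i$ and the canonical dual is $S_F^{-1}F=\{S_F^{-1}f_i\}_{i=1}^N$. A frame $G=\{g_i\}_{i=1}^N$ is a dual of $F$ if $f=\sum_i\langle f,f_i\rangle g_i=\sum_i\langle f,g_i\rangle f_i$ for all $f$. A probability sequence is $\{p_i\}_{i=1}^N$ with $0\le p_i\le1$, $\sum p_i=1$; weight numbers $q_i=\frac{\sum_{j} p_j}{\sum_{j} p_j-p_i}\cdot\frac{N-1}{n}$. For $\Lambda\subseteq\{1,\dots,N\}$ the error operator is $E_{\Lambda,(F,G)}f=\sum_{i\in\Lambda}q_i\langle f,f_i\rangle g_i$. Set $r_P^{(1)}(F,G)=\max_{|\Lambda|=1}\rho(E_{\Lambda,(F,G)})$ ($\rho$ = spectral radius) and $\mathcal{A}_P^{(1)}(F,G)=\max_{|\Lambda|=1}\frac{\|E_{\Lambda,(F,G)}\|+\rho(E_{\Lambda,(F,G)})}{2}$.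 A dual $G$ of $F$ is a 1-erasure PSOD of $F$ if $r_P^{(1)}(F,G)=\min\{r_P^{(1)}(F,G'):G'\text{ a dual of }F\}$. $\Delta_F^{(1)}$ is the set of duals $G$ of $F$ minimizing $\mathcal{A}_P^{(1)}(F,G)$ over all duals of $F$ (1-erasure PASOD-frames). *)

theory Defs
  imports "Jordan_Normal_Form.Spectral_Radius" "Jordan_Normal_Form.Gauss_Jordan_Elimination"
begin

text \<open>The n-dimensional Hilbert space H is modelled as K^n inside complex n-vectors,
  where the scalar field K is either the reals (embedded in the complex numbers)
  or all complex numbers. Sequences are indexed by 0..N-1.\<close>

definition in_space :: "complex set \<Rightarrow> nat \<Rightarrow> complex vec \<Rightarrow> bool" where
  "in_space K n v \<longleftrightarrow> v \<in> carrier_vec n \<and> (\<forall>k < n. v $ k \<in> K)"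

definition vnorm :: "complex vec \<Rightarrow> real" where
  "vnorm v = sqrt (\<Sum>k<dim_vec v. (cmod (v $ k))^2)"

text \<open>inner product  <f, g> = sum_k f_k * conj(g_k)\<close>
definition ip :: "complex vec \<Rightarrow> complex vec \<Rightarrow> complex" where
  "ip f g = f \<bullet>c g"

definition is_frame :: "complex set \<Rightarrow> nat \<Rightarrow> nat \<Rightarrow> (nat \<Rightarrow> complex vec) \<Rightarrow> bool" where
  "is_frame K n N F \<longleftrightarrow> (\<forall>i<N. in_space K n (F i)) \<and>
     (\<exists>A B. A > 0 \<and> B > 0 \<and> (\<forall>f. in_space K n f \<longrightarrow>
        A * (vnorm f)^2 \<le> (\<Sum>i<N. (cmod (ip f (F i)))^2) \<and>
        (\<Sum>i<N. (cmod (ip f (F i)))^2) \<le> B * (vnorm f)^2))"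

definition is_tight_frame :: "complex set \<Rightarrow> nat \<Rightarrow> nat \<Rightarrow> (nat \<Rightarrow> complex vec) \<Rightarrow> bool" where
  "is_tight_frame K n N F \<longleftrightarrow> (\<forall>i<N. in_space K n (F i)) \<and>
     (\<exists>A. A > 0 \<and> (\<forall>f. in_space K n f \<longrightarrow>
        (\<Sum>i<N. (cmod (ip f (F i)))^2) = A * (vnorm f)^2))"

text \<open>rank-one operator  f \<mapsto> <f, x> y  as a matrix\<close>
definition rank_one :: "complex vec \<Rightarrow> complex vec \<Rightarrow> complex mat" where
  "rank_one y x = mat (dim_vec y) (dim_vec x) (\<lambda>(a, b). y $ a * cnj (x $ b))"

definition frame_op :: "nat \<Rightarrow> nat \<Rightarrow> (nat \<Rightarrow> complex vec) \<Rightarrow> complex mat" where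
  "frame_op n N F = fold (\<lambda>i acc. rank_one (F i) (F i) + acc) [0..<N] (0\<^sub>m n n)"

definition canonical_dual :: "nat \<Rightarrow> nat \<Rightarrow> (nat \<Rightarrow> complex vec) \<Rightarrow> (nat \<Rightarrow> complex vec)" where
  "canonical_dual n N F = (\<lambda>i. the (mat_inverse (frame_op n N F)) *\<^sub>v F i)"

definition sum_vec :: "nat \<Rightarrow> nat \<Rightarrow> (nat \<Rightarrow> complex vec) \<Rightarrow> complex vec" where
  "sum_vec n N v = fold (\<lambda>i acc. v i + acc) [0..<N] (0\<^sub>v n)"

definition is_dual :: "complex set \<Rightarrow> nat \<Rightarrow> nat \<Rightarrow> (nat \<Rightarrow> complex vec) \<Rightarrow> (nat \<Rightarrow> complex vec) \<Rightarrow> bool" where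
  "is_dual K n N F G \<longleftrightarrow> is_frame K n N G \<and>
     (\<forall>f. in_space K n f \<longrightarrow>
        f = sum_vec n N (\<lambda>i. ip f (F i) \<cdot>\<^sub>v G i) \<and>
        f = sum_vec n N (\<lambda>i. ip f (G i) \<cdot>\<^sub>v F i))"

definition prob_seq :: "nat \<Rightarrow> (nat \<Rightarrow> real) \<Rightarrow> bool" where
  "prob_seq N p \<longleftrightarrow> (\<forall>i<N. 0 \<le> p i \<and> p i \<le> 1) \<and> (\<Sum>i<N. p i) = 1"

definition weight :: "nat \<Rightarrow> nat \<Rightarrow> (nat \<Rightarrow> real) \<Rightarrow> nat \<Rightarrow> real" where
  "weight n N p i = (\<Sum>j<N. p j) / ((\<Sum>j<N. p j) - p i) * ((real N - 1) / real n)"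

text \<open>error operator for the one-element erasure set {i}: f \<mapsto> q_i <f, f_i> g_i\<close>
definition err_op1 :: "nat \<Rightarrow> nat \<Rightarrow> (nat \<Rightarrow> real) \<Rightarrow> (nat \<Rightarrow> complex vec) \<Rightarrow> (nat \<Rightarrow> complex vec) \<Rightarrow> nat \<Rightarrow> complex mat" where
  "err_op1 n N p F G i = complex_of_real (weight n N p i) \<cdot>\<^sub>m rank_one (G i) (F i)"

definition op_norm :: "complex set \<Rightarrow> nat \<Rightarrow> complex mat \<Rightarrow> real" where
  "op_norm K n A = Sup {vnorm (A *\<^sub>v v) | v. in_space K n v \<and> vnorm v \<le> 1}"

definition r1 :: "nat \<Rightarrow> nat \<Rightarrow> (nat \<Rightarrow> real) \<Rightarrow> (nat \<Rightarrow> complex vec) \<Rightarrow> (nat \<Rightarrow> complex vec) \<Rightarrow> real" where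
  "r1 n N p F G = Max ((\<lambda>i. spectral_radius (err_op1 n N p F G i)) ` {..<N})"

definition A1 :: "complex set \<Rightarrow> nat \<Rightarrow> nat \<Rightarrow> (nat \<Rightarrow> real) \<Rightarrow> (nat \<Rightarrow> complex vec) \<Rightarrow> (nat \<Rightarrow> complex vec) \<Rightarrow> real" where
  "A1 K n N p F G = Max ((\<lambda>i. (op_norm K n (err_op1 n N p F G i)
                               + spectral_radius (err_op1 n N p F G i)) / 2) ` {..<N})"

definition is_PSOD1 :: "complex set \<Rightarrow> nat \<Rightarrow> nat \<Rightarrow> (nat \<Rightarrow> real) \<Rightarrow> (nat \<Rightarrow> complex vec) \<Rightarrow> (nat \<Rightarrow> complex vec) \<Rightarrow> bool" where
  "is_PSOD1 K n N p F G \<longleftrightarrow> is_dual K n N F G \<and>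
     (\<forall>G'. is_dual K n N F G' \<longrightarrow> r1 n N p F G \<le> r1 n N p F G')"

definition Delta1 :: "complex set \<Rightarrow> nat \<Rightarrow> nat \<Rightarrow> (nat \<Rightarrow> real) \<Rightarrow> (nat \<Rightarrow> complex vec) \<Rightarrow> (nat \<Rightarrow> complex vec) set" where
  "Delta1 K n N p F = {G. is_dual K n N F G \<and>
     (\<forall>G'. is_dual K n N F G' \<longrightarrow> A1 K n N p F G \<le> A1 K n N p F G')}"

end

theory Submission
  imports Defs "HOL-Analysis.L2_Norm"
begin

(* For a tight frame with bound A the canonical dual is f_i / A. Every error operator is the
   rank-one map f \<mapsto> q_i <f, f_i> g_i, with spectral radius q_i |<g_i, f_i>| and norm
   q_i \<parallel>f_i\<parallel> \<parallel>g_i\<parallel>; for the canonical dual the two coincide, so A(S\<inverse>F) = r(S\<inverse>F), while r \<le> A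
   for every dual. This gives one direction. Conversely, suppose a dual G had r(G) < r(S\<inverse>F) = M
   and move along the affine line of duals (1 - t) S\<inverse>F + t G. Every spectral term then stays below
   M by a margin of order t, while the norm term exceeds the spectral term by only O(t\<^sup>2); hence A
   drops below M for small t > 0. *)

section \<open>Inner product and norm\<close>

lemma ip_expand:
  assumes "v \<in> carrier_vec n"
  shows "ip u v = (\<Sum>k<n. u $ k * cnj (v $ k))"
  using assms unfolding ip_def scalar_prod_def by (auto intro!: sum.cong)

lemma ip_cnj_commute:
  assumes "u \<in> carrier_vec n" "v \<in> carrier_vec n"
  shows "ip v u = cnj (ip u v)"
  using assms by (simp add: ip_expand[of _ n] mult.commute)

lemma ip_add_left:
  assumes "u \<in> carrier_vec n" "w \<in> carrier_vec n" "v \<in> carrier_vec n"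
  shows "ip (u + w) v = ip u v + ip w v"
  using assms by (simp add: ip_expand[of _ n] distrib_right sum.distrib)

lemma ip_add_right:
  assumes "v \<in> carrier_vec n" "w \<in> carrier_vec n"
  shows "ip u (v + w) = ip u v + ip u w"
  using assms by (simp add: ip_expand[of _ n] distrib_left sum.distrib)

lemma ip_smult_left:
  assumes "u \<in> carrier_vec n" "v \<in> carrier_vec n"
  shows "ip (a \<cdot>\<^sub>v u) v = a * ip u v"
  using assms by (simp add: ip_expand[of _ n] sum_distrib_left mult.assoc)

lemma ip_smult_right:
  assumes "v \<in> carrier_vec n"
  shows "ip u (a \<cdot>\<^sub>v v) = cnj a * ip u v"
  using assms by (simp add: ip_expand[of _ n] sum_distrib_left ac_simps)

lemma ip_zero_left:
  assumes "v \<in> carrier_vec n"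
  shows "ip (0\<^sub>v n) v = 0"
  using assms by (simp add: ip_expand)

lemma vnorm_eq_L2_set: "vnorm v = L2_set (\<lambda>k. cmod (v $ k)) {..<dim_vec v}"
  unfolding vnorm_def L2_set_def ..

lemma vnorm_nonneg: "vnorm v \<ge> 0"
  by (simp add: vnorm_eq_L2_set L2_set_nonneg)

lemma vnorm_power2: "(vnorm v)^2 = (\<Sum>k<dim_vec v. (cmod (v $ k))^2)"
  unfolding vnorm_def by (simp add: sum_nonneg)

lemma ip_self:
  assumes "v \<in> carrier_vec n"
  shows "ip v v = of_real ((vnorm v)^2)"
  using assms by (simp add: ip_expand vnorm_power2 complex_norm_square del: of_real_power)

lemma vnorm_smult: "vnorm (a \<cdot>\<^sub>v v) = cmod a * vnorm v"
  unfolding vnorm_def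
  by (simp add: norm_mult power_mult_distrib sum_distrib_left[symmetric] real_sqrt_mult)

lemma vnorm_eq_0_iff:
  assumes "v \<in> carrier_vec n"
  shows "vnorm v = 0 \<longleftrightarrow> v = 0\<^sub>v n"
proof
  assume "vnorm v = 0"
  then have "(\<Sum>k<n. (cmod (v $ k))^2) = 0"
    using assms vnorm_power2[of v] by simp
  then show "v = 0\<^sub>v n"
    using assms by (intro eq_vecI) (auto simp: sum_nonneg_eq_0_iff)
qed (simp add: vnorm_def)

lemma vnorm_add_power2:
  assumes "u \<in> carrier_vec n" "w \<in> carrier_vec n"
  shows "(vnorm (u + w))^2 = (vnorm u)^2 + 2 * Re (ip u w) + (vnorm w)^2"
proof -
  have "of_real ((vnorm (u + w))^2) = ip (u + w) (u + w)"
    using assms by (intro ip_self[symmetric, of _ n]) simp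
  also have "\<dots> = ip u u + ip u w + (ip w u + ip w w)"
    using assms by (simp add: ip_add_left ip_add_right)
  also have "\<dots> = of_real ((vnorm u)^2 + (vnorm w)^2) + (ip u w + cnj (ip u w))"
    using assms by (simp add: ip_self ip_cnj_commute[of u n w])
  finally show ?thesis
    by (metis Re_complex_of_real complex_add_cnj plus_complex.sel(1) add.commute add.left_commute)
qed

lemma ip_Cauchy_Schwarz:
  assumes "u \<in> carrier_vec n" "v \<in> carrier_vec n"
  shows "cmod (ip u v) \<le> vnorm u * vnorm v"
proof -
  have "cmod (ip u v) \<le> (\<Sum>k<n. \<bar>cmod (u $ k)\<bar> * \<bar>cmod (v $ k)\<bar>)"
    unfolding ip_expand[OF assms(2)] by (rule order_trans[OF norm_sum]) (simp add: norm_mult)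
  also have "\<dots> \<le> vnorm u * vnorm v"
    using assms L2_set_mult_ineq[of "\<lambda>k. cmod (u $ k)" "\<lambda>k. cmod (v $ k)" "{..<n}"]
    by (simp add: vnorm_eq_L2_set)
  finally show ?thesis .
qed

lemma in_space_carrier: "in_space K n v \<Longrightarrow> v \<in> carrier_vec n"
  unfolding in_space_def by simp

lemma in_space_zero: "K = \<real> \<or> K = UNIV \<Longrightarrow> in_space K n (0\<^sub>v n)"
  unfolding in_space_def by auto

lemma in_space_unit_vec: "K = \<real> \<or> K = UNIV \<Longrightarrow> in_space K n (unit_vec n j)"
  unfolding in_space_def unit_vec_def by auto

lemma in_space_add:
  "K = \<real> \<or> K = UNIV \<Longrightarrow> in_space K n u \<Longrightarrow> in_space K n v \<Longrightarrow> in_space K n (u + v)"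
  unfolding in_space_def by auto

lemma in_space_smult:
  "K = \<real> \<or> K = UNIV \<Longrightarrow> c \<in> K \<Longrightarrow> in_space K n v \<Longrightarrow> in_space K n (c \<cdot>\<^sub>v v)"
  unfolding in_space_def by auto

lemma in_space_smult_real:
  "K = \<real> \<or> K = UNIV \<Longrightarrow> in_space K n v \<Longrightarrow> in_space K n (of_real r \<cdot>\<^sub>v v)"
  unfolding in_space_def by auto

lemma sum_vec_0 [simp]: "sum_vec n 0 v = 0\<^sub>v n"
  unfolding sum_vec_def by simp

lemma sum_vec_Suc [simp]: "sum_vec n (Suc N) v = v N + sum_vec n N v"
  unfolding sum_vec_def by simp

lemma sum_vec_eq_vec:
  assumes "\<And>i. i < N \<Longrightarrow> v i \<in> carrier_vec n"
  shows "sum_vec n N v = vec n (\<lambda>a. \<Sum>i<N. v i $ a)"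
  using assms by (induction N) (auto intro!: eq_vecI simp: add.commute)

lemma sum_vec_linear_comb:
  assumes "\<And>i. i < N \<Longrightarrow> u i \<in> carrier_vec n" "\<And>i. i < N \<Longrightarrow> w i \<in> carrier_vec n"
  shows "sum_vec n N (\<lambda>i. a \<cdot>\<^sub>v u i + b \<cdot>\<^sub>v w i) = a \<cdot>\<^sub>v sum_vec n N u + b \<cdot>\<^sub>v sum_vec n N w"
proof (rule eq_vecI)
  fix k assume "k < dim_vec (a \<cdot>\<^sub>v sum_vec n N u + b \<cdot>\<^sub>v sum_vec n N w)"
  then have k: "k < n" using assms by (simp add: sum_vec_eq_vec)
  have "dim_vec (u i) = n" "dim_vec (w i) = n" if "i < N" for i
    using assms that by auto
  then have "(\<Sum>i<N. (a \<cdot>\<^sub>v u i + b \<cdot>\<^sub>v w i) $ k) = (\<Sum>i<N. a * u i $ k + b * w i $ k)"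
    using k by (intro sum.cong refl) auto
  then show "sum_vec n N (\<lambda>i. a \<cdot>\<^sub>v u i + b \<cdot>\<^sub>v w i) $ k = (a \<cdot>\<^sub>v sum_vec n N u + b \<cdot>\<^sub>v sum_vec n N w) $ k"
    using assms k by (simp add: sum_vec_eq_vec sum.distrib sum_distrib_left)
qed (use assms in \<open>simp add: sum_vec_eq_vec\<close>)

lemma ip_sum_vec_left:
  assumes "\<And>i. i < N \<Longrightarrow> v i \<in> carrier_vec n" "w \<in> carrier_vec n"
  shows "ip (sum_vec n N v) w = (\<Sum>i<N. ip (v i) w)"
  using assms by (simp add: ip_expand[of w n] sum_vec_eq_vec sum_distrib_right sum.swap[of _ "{..<n}"])

section \<open>Rank-one operators and the frame operator\<close>

lemma rank_one_carrier:
  "x \<in> carrier_vec n \<Longrightarrow> y \<in> carrier_vec m \<Longrightarrow> rank_one y x \<in> carrier_mat m n"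
  unfolding rank_one_def by auto

lemma rank_one_mult_vec:
  assumes "x \<in> carrier_vec n" "y \<in> carrier_vec m" "v \<in> carrier_vec n"
  shows "rank_one y x *\<^sub>v v = ip v x \<cdot>\<^sub>v y"
  using assms
  by (intro eq_vecI) (auto simp: rank_one_def ip_expand[of _ n] scalar_prod_def sum_distrib_left ac_simps
      intro!: sum.cong)

lemma smult_mat_mult_vec:
  assumes "A \<in> carrier_mat m n" "v \<in> carrier_vec n"
  shows "(c \<cdot>\<^sub>m A) *\<^sub>v v = c \<cdot>\<^sub>v (A *\<^sub>v v)"
  using assms by (intro eq_vecI) (auto simp: scalar_prod_def sum_distrib_left ac_simps)

lemma smult_rank_one_mult_vec:
  assumes "x \<in> carrier_vec n" "y \<in> carrier_vec m" "v \<in> carrier_vec n"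
  shows "(c \<cdot>\<^sub>m rank_one y x) *\<^sub>v v = (c * ip v x) \<cdot>\<^sub>v y"
  using assms by (simp add: smult_mat_mult_vec[of _ m n] rank_one_carrier rank_one_mult_vec smult_smult_assoc)

lemma frame_op_0 [simp]: "frame_op n 0 F = 0\<^sub>m n n"
  unfolding frame_op_def by simp

lemma frame_op_Suc [simp]: "frame_op n (Suc N) F = rank_one (F N) (F N) + frame_op n N F"
  unfolding frame_op_def by simp

lemma frame_op_carrier:
  "(\<And>i. i < N \<Longrightarrow> F i \<in> carrier_vec n) \<Longrightarrow> frame_op n N F \<in> carrier_mat n n"
  by (induction N) (auto simp: rank_one_carrier)

lemma frame_op_index:
  assumes "\<And>i. i < N \<Longrightarrow> F i \<in> carrier_vec n" "a < n" "b < n"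
  shows "frame_op n N F $$ (a, b) = (\<Sum>i<N. F i $ a * cnj (F i $ b))"
  using assms
proof (induction N)
  case (Suc N)
  have "a < dim_vec (F N)" "b < dim_vec (F N)"
    using carrier_vecD[OF Suc.prems(1)[of N]] Suc.prems(2,3) by auto
  then have "rank_one (F N) (F N) $$ (a, b) = F N $ a * cnj (F N $ b)"
    unfolding rank_one_def by simp
  moreover have "frame_op n N F \<in> carrier_mat n n"
    using Suc.prems by (auto intro: frame_op_carrier)
  ultimately show ?case using Suc by simp
qed simp

lemma frame_op_quadratic_form:
  assumes "\<And>i. i < N \<Longrightarrow> F i \<in> carrier_vec n" "f \<in> carrier_vec n"
  shows "ip (frame_op n N F *\<^sub>v f) f = of_real (\<Sum>i<N. (cmod (ip f (F i)))^2)"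
  using assms(1)
proof (induction N)
  case 0
  show ?case using assms(2) by (simp add: ip_expand[of _ n])
next
  case (Suc N)
  have F: "F N \<in> carrier_vec n" and S: "frame_op n N F \<in> carrier_mat n n"
    using Suc.prems by (auto intro: frame_op_carrier)
  have "frame_op n (Suc N) F *\<^sub>v f = ip f (F N) \<cdot>\<^sub>v F N + frame_op n N F *\<^sub>v f"
    using add_mult_distrib_mat_vec[OF rank_one_carrier[OF F F] S assms(2)]
    by (simp add: rank_one_mult_vec[OF F F assms(2)])
  then have "ip (frame_op n (Suc N) F *\<^sub>v f) f = ip f (F N) * ip (F N) f + ip (frame_op n N F *\<^sub>v f) f"
    using F S assms(2) by (simp add: ip_add_left[of _ n] ip_smult_left[of _ n])
  also have "ip f (F N) * ip (F N) f = of_real ((cmod (ip f (F N)))^2)"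
    using F assms(2) by (simp add: ip_cnj_commute[of f n] complex_norm_square del: of_real_power)
  finally show ?case using Suc by simp
qed

lemma spectral_radius_rank_one:
  assumes x: "x \<in> carrier_vec n" and y: "y \<in> carrier_vec n" and "n > 0"
  shows "spectral_radius (c \<cdot>\<^sub>m rank_one y x) = cmod (c * ip y x)"
proof -
  define B where "B = c \<cdot>\<^sub>m rank_one y x"
  define l where "l = c * ip y x"
  have B: "B \<in> carrier_mat n n" unfolding B_def using rank_one_carrier[OF x y] by simp
  have Bv: "B *\<^sub>v v = (c * ip v x) \<cdot>\<^sub>v y" if "v \<in> carrier_vec n" for v
    unfolding B_def using smult_rank_one_mult_vec[OF x y that] .
  have nonzero_eigenvalue: "k = l" if "k \<in> spectrum B" "k \<noteq> 0" for k
  proof -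
    obtain v where v: "v \<in> carrier_vec n" "v \<noteq> 0\<^sub>v n" "B *\<^sub>v v = k \<cdot>\<^sub>v v"
      using \<open>k \<in> spectrum B\<close> B unfolding spectrum_def eigenvalue_def eigenvector_def by auto
    have kv: "k \<cdot>\<^sub>v v = (c * ip v x) \<cdot>\<^sub>v y" using v Bv by simp
    have "ip v x \<noteq> 0"
    proof
      assume "ip v x = 0"
      then have "k \<cdot>\<^sub>v v = 0\<^sub>v n" using kv y by auto
      have "v = (1 / k) \<cdot>\<^sub>v (k \<cdot>\<^sub>v v)" using \<open>k \<noteq> 0\<close> by (simp add: smult_smult_assoc)
      also have "\<dots> = 0\<^sub>v n" unfolding \<open>k \<cdot>\<^sub>v v = 0\<^sub>v n\<close> by (intro eq_vecI) auto
      finally show False using v(2) by simp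
    qed
    moreover have "k * ip v x = l * ip v x"
      using arg_cong[OF kv, of "\<lambda>w. ip w x"] x y v(1) by (simp add: ip_smult_left l_def)
    ultimately show "k = l" by simp
  qed
  have l_eigenvalue: "l \<in> spectrum B" if "l \<noteq> 0"
  proof -
    have "y \<noteq> 0\<^sub>v n" using that x by (auto simp: l_def ip_zero_left)
    moreover have "B *\<^sub>v y = l \<cdot>\<^sub>v y" using Bv[OF y] by (simp add: l_def)
    ultimately show ?thesis unfolding spectrum_def eigenvalue_def eigenvector_def using B y by auto
  qed
  have "spectral_radius B \<in> norm ` spectrum B" by (rule spectral_radius_mem_max(1)[OF B \<open>n > 0\<close>])
  then have "spectral_radius B = 0 \<or> spectral_radius B = cmod l"
    using nonzero_eigenvalue by fastforce
  moreover have "l \<noteq> 0 \<Longrightarrow> cmod l \<le> spectral_radius B"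
    using spectral_radius_mem_max(2)[OF B \<open>n > 0\<close>] l_eigenvalue by auto
  ultimately have "spectral_radius B = cmod l" by (cases "l = 0") auto
  then show ?thesis unfolding B_def l_def .
qed

lemma op_norm_rank_one:
  assumes K: "K = \<real> \<or> K = UNIV" and x: "in_space K n x" and y: "y \<in> carrier_vec n"
  shows "op_norm K n (c \<cdot>\<^sub>m rank_one y x) = cmod c * vnorm x * vnorm y"
proof -
  have xc: "x \<in> carrier_vec n" using x by (rule in_space_carrier)
  have image: "vnorm ((c \<cdot>\<^sub>m rank_one y x) *\<^sub>v v) = cmod c * cmod (ip v x) * vnorm y"
    if "v \<in> carrier_vec n" for v
    using smult_rank_one_mult_vec[OF xc y that] by (simp add: vnorm_smult norm_mult)
  show ?thesis
    unfolding op_norm_def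
  proof (rule cSup_eq_maximum)
    show "cmod c * vnorm x * vnorm y \<in> {vnorm ((c \<cdot>\<^sub>m rank_one y x) *\<^sub>v v) |v. in_space K n v \<and> vnorm v \<le> 1}"
    proof (cases "x = 0\<^sub>v n")
      case True
      then show ?thesis
        using in_space_zero[OF K] image[of "0\<^sub>v n"] xc by (force simp: ip_zero_left vnorm_def)
    next
      case False
      then have nx: "vnorm x > 0" using vnorm_eq_0_iff[OF xc] vnorm_nonneg[of x] by simp
      define v where "v = of_real (1 / vnorm x) \<cdot>\<^sub>v x"
      have "in_space K n v" unfolding v_def by (rule in_space_smult_real[OF K x])
      moreover have "vnorm v = 1" unfolding v_def vnorm_smult using nx by (simp add: norm_divide)
      moreover have "cmod (ip v x) = vnorm x"
        using nx xc by (simp add: v_def ip_smult_left ip_self norm_mult power2_eq_square)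
      ultimately show ?thesis using image[of v] in_space_carrier by force
    qed
  next
    fix s assume "s \<in> {vnorm ((c \<cdot>\<^sub>m rank_one y x) *\<^sub>v v) |v. in_space K n v \<and> vnorm v \<le> 1}"
    then obtain v where v: "in_space K n v" "vnorm v \<le> 1" and s: "s = cmod c * cmod (ip v x) * vnorm y"
      using image in_space_carrier by blast
    have "cmod (ip v x) \<le> vnorm v * vnorm x"
      using ip_Cauchy_Schwarz in_space_carrier[OF v(1)] xc by blast
    also have "\<dots> \<le> vnorm x" using mult_right_mono[OF v(2) vnorm_nonneg[of x]] by simp
    finally show "s \<le> cmod c * vnorm x * vnorm y"
      unfolding s by (simp add: mult.assoc mult_left_mono mult_right_mono vnorm_nonneg)
  qed
qed

section \<open>Tight frames\<close>

lemma ip_unit_vec_right: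
  assumes "w \<in> carrier_vec n" "l < n"
  shows "ip w (unit_vec n l) = w $ l"
  using assms by (simp add: ip_expand[of _ n] if_distrib cong: if_cong)

lemma ip_mult_unit_vec:
  assumes "H \<in> carrier_mat n n" "j < n" "l < n"
  shows "ip (H *\<^sub>v unit_vec n j) (unit_vec n l) = H $$ (l, j)"
  using assms by (simp add: ip_unit_vec_right[of _ n])

text \<open>Polarization with the test vectors \<open>e\<^sub>j + c e\<^sub>l\<close> for \<open>c = 1\<close> and \<open>c = \<i>\<close>; for \<open>K = \<real>\<close>,
  where \<open>\<i>\<close> is not available, the real entries give the symmetry \<open>H\<^sub>l\<^sub>j = H\<^sub>j\<^sub>l\<close> instead.\<close>
lemma hermitian_quadratic_form_zero:
  assumes K: "K = \<real> \<or> K = UNIV" and H: "H \<in> carrier_mat n n"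
    and entries: "\<And>j l. j < n \<Longrightarrow> l < n \<Longrightarrow> H $$ (j, l) \<in> K"
    and hermitian: "\<And>j l. j < n \<Longrightarrow> l < n \<Longrightarrow> H $$ (l, j) = cnj (H $$ (j, l))"
    and form: "\<And>v. in_space K n v \<Longrightarrow> ip (H *\<^sub>v v) v = 0"
  shows "H = 0\<^sub>m n n"
proof -
  have diagonal: "H $$ (j, j) = 0" if "j < n" for j
    using form[OF in_space_unit_vec[OF K]] ip_mult_unit_vec[OF H that that] by simp
  have polar: "cnj c * H $$ (l, j) + c * H $$ (j, l) = 0" if j: "j < n" and l: "l < n" and c: "c \<in> K" for j l c
  proof -
    define u :: "complex vec" where "u = unit_vec n j"
    define w :: "complex vec" where "w = unit_vec n l"
    have uw: "u \<in> carrier_vec n" "w \<in> carrier_vec n" "H *\<^sub>v u \<in> carrier_vec n" "H *\<^sub>v w \<in> carrier_vec n"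
      using H by (auto simp: u_def w_def)
    have "in_space K n (u + c \<cdot>\<^sub>v w)"
      unfolding u_def w_def by (intro in_space_add[OF K] in_space_smult[OF K c] in_space_unit_vec[OF K])
    then have "0 = ip (H *\<^sub>v (u + c \<cdot>\<^sub>v w)) (u + c \<cdot>\<^sub>v w)" using form by simp
    also have "\<dots> = ip (H *\<^sub>v u) u + cnj c * ip (H *\<^sub>v u) w + c * ip (H *\<^sub>v w) u + c * cnj c * ip (H *\<^sub>v w) w"
      using H uw by (simp add: mult_add_distrib_mat_vec mult_mat_vec ip_add_left[of _ n] ip_add_right[of _ n]
          ip_smult_left[of _ n] ip_smult_right[of _ n] algebra_simps)
    also have "\<dots> = cnj c * H $$ (l, j) + c * H $$ (j, l)"
      using H j l by (simp add: u_def w_def ip_mult_unit_vec diagonal)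
    finally show ?thesis by simp
  qed
  show ?thesis
  proof (rule eq_matI)
    fix j l assume "j < dim_row (0\<^sub>m n n :: complex mat)" "l < dim_col (0\<^sub>m n n :: complex mat)"
    then have j: "j < n" and l: "l < n" by auto
    have sum0: "H $$ (l, j) + H $$ (j, l) = 0" using polar[OF j l, of 1] K by auto
    have "H $$ (l, j) = H $$ (j, l)"
      using K
    proof
      assume "K = \<real>"
      then show ?thesis using hermitian[OF j l] entries[OF j l] by (simp add: Reals_cnj_iff)
    next
      assume "K = UNIV"
      then show ?thesis using polar[OF j l, of \<i>] by (simp add: algebra_simps)
    qed
    then show "H $$ (j, l) = 0\<^sub>m n n $$ (j, l)" using sum0 j l by simp
  qed (use H in auto)
qed

lemma tight_frame_op:
  assumes K: "K = \<real> \<or> K = UNIV" and F: "\<And>i. i < N \<Longrightarrow> in_space K n (F i)"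
    and tight: "\<And>f. in_space K n f \<Longrightarrow> (\<Sum>i<N. (cmod (ip f (F i)))^2) = A * (vnorm f)^2"
  shows "frame_op n N F = of_real A \<cdot>\<^sub>m 1\<^sub>m n"
proof -
  have Fc: "\<And>i. i < N \<Longrightarrow> F i \<in> carrier_vec n" using F in_space_carrier by blast
  define S where "S = frame_op n N F"
  define H where "H = S + of_real (- A) \<cdot>\<^sub>m 1\<^sub>m n"
  have S: "S \<in> carrier_mat n n" unfolding S_def using Fc by (rule frame_op_carrier)
  have H: "H \<in> carrier_mat n n" unfolding H_def using S by simp
  have S_index: "S $$ (j, l) = (\<Sum>i<N. F i $ j * cnj (F i $ l))" if "j < n" "l < n" for j l
    unfolding S_def using Fc that by (rule frame_op_index)
  have H_index: "H $$ (j, l) = S $$ (j, l) - (if j = l then of_real A else 0)" if "j < n" "l < n" for j l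
    using S that by (simp add: H_def)
  have H0: "H = 0\<^sub>m n n"
  proof (rule hermitian_quadratic_form_zero[OF K H])
    fix j l assume jl: "j < n" "l < n"
    show "H $$ (j, l) \<in> K"
      using K F jl unfolding H_index[OF jl] S_index[OF jl] in_space_def
      by (auto intro!: Reals_diff sum_in_Reals Reals_mult simp: cnj_reals)
    show "H $$ (l, j) = cnj (H $$ (j, l))"
      using jl by (simp add: H_index S_index mult.commute)
  next
    fix v assume v: "in_space K n v"
    then have vc: "v \<in> carrier_vec n" by (rule in_space_carrier)
    have "H *\<^sub>v v = S *\<^sub>v v + of_real (- A) \<cdot>\<^sub>v v"
      using S vc by (simp add: H_def add_mult_distrib_mat_vec smult_mat_mult_vec[of _ n n])
    then show "ip (H *\<^sub>v v) v = 0"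
      using S vc tight[OF v] by (simp add: ip_add_left[of _ n] ip_smult_left[of _ n] ip_self S_def
          frame_op_quadratic_form[OF Fc])
  qed
  show ?thesis
    unfolding S_def[symmetric]
  proof (rule eq_matI)
    fix j l assume "j < dim_row (of_real A \<cdot>\<^sub>m 1\<^sub>m n :: complex mat)" "l < dim_col (of_real A \<cdot>\<^sub>m 1\<^sub>m n :: complex mat)"
    then show "S $$ (j, l) = (of_real A \<cdot>\<^sub>m 1\<^sub>m n) $$ (j, l)"
      using H_index[of j l] H0 by auto
  qed (use S in auto)
qed

lemma mat_inverse_smult_one:
  fixes c :: complex
  assumes "c \<noteq> 0"
  shows "mat_inverse (c \<cdot>\<^sub>m 1\<^sub>m n) = Some ((1 / c) \<cdot>\<^sub>m 1\<^sub>m n)"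
proof -
  have "c \<cdot>\<^sub>m 1\<^sub>m n \<in> Units (ring_mat TYPE(complex) n ())"
    unfolding Units_def ring_mat_def using assms by (auto intro!: bexI[of _ "(1 / c) \<cdot>\<^sub>m 1\<^sub>m n"])
  then obtain B where B: "mat_inverse (c \<cdot>\<^sub>m 1\<^sub>m n) = Some B"
    using mat_inverse(1)[of "c \<cdot>\<^sub>m 1\<^sub>m n" n] by fastforce
  then have inv: "c \<cdot>\<^sub>m 1\<^sub>m n * B = 1\<^sub>m n" and Bc: "B \<in> carrier_mat n n"
    using mat_inverse(2)[of "c \<cdot>\<^sub>m 1\<^sub>m n" n] by auto
  then have cB: "c \<cdot>\<^sub>m B = 1\<^sub>m n" by (simp add: mult_smult_assoc_mat[of _ n n])
  have "B $$ (i, j) = ((1 / c) \<cdot>\<^sub>m 1\<^sub>m n) $$ (i, j)" if "i < n" "j < n" for i j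
  proof -
    have "c * B $$ (i, j) = 1\<^sub>m n $$ (i, j)"
      using arg_cong[OF cB, of "\<lambda>M. M $$ (i, j)"] Bc that by simp
    then show ?thesis using assms that by (simp add: field_simps)
  qed
  then have "B = (1 / c) \<cdot>\<^sub>m 1\<^sub>m n" using Bc by (intro eq_matI) auto
  with B show ?thesis by simp
qed

lemma tight_frame_canonical_dual:
  assumes K: "K = \<real> \<or> K = UNIV" and F: "\<And>i. i < N \<Longrightarrow> in_space K n (F i)"
    and tight: "\<And>f. in_space K n f \<Longrightarrow> (\<Sum>i<N. (cmod (ip f (F i)))^2) = A * (vnorm f)^2"
    and "A \<noteq> 0" "i < N"
  shows "canonical_dual n N F i = of_real (1 / A) \<cdot>\<^sub>v F i"
  using assms mat_inverse_smult_one[of "of_real A" n] in_space_carrier[OF F[OF \<open>i < N\<close>]]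
  by (simp add: canonical_dual_def tight_frame_op[OF K F tight] smult_mat_mult_vec[of _ n n])

lemma tight_frame_is_frame: "is_tight_frame K n N F \<Longrightarrow> is_frame K n N F"
  unfolding is_tight_frame_def is_frame_def by (metis order_refl)

lemma is_tight_frameE:
  assumes "is_tight_frame K n N F"
  obtains A where "A > 0" "\<And>i. i < N \<Longrightarrow> in_space K n (F i)"
    "\<And>f. in_space K n f \<Longrightarrow> (\<Sum>i<N. (cmod (ip f (F i)))^2) = A * (vnorm f)^2"
  using assms unfolding is_tight_frame_def by blast

lemma tight_frame_canonical_dual_norms:
  assumes K: "K = \<real> \<or> K = UNIV" and F: "\<And>i. i < N \<Longrightarrow> in_space K n (F i)"
    and tight: "\<And>f. in_space K n f \<Longrightarrow> (\<Sum>i<N. (cmod (ip f (F i)))^2) = A * (vnorm f)^2"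
    and A: "A > 0" and i: "i < N"
  shows "cmod (ip (canonical_dual n N F i) (F i)) = (vnorm (F i))^2 / A"
    and "vnorm (F i) * vnorm (canonical_dual n N F i) = (vnorm (F i))^2 / A"
proof -
  have C: "canonical_dual n N F i = of_real (1 / A) \<cdot>\<^sub>v F i"
    using K F tight A i by (intro tight_frame_canonical_dual) auto
  have "ip (canonical_dual n N F i) (F i) = of_real ((vnorm (F i))^2 / A)"
    using in_space_carrier[OF F[OF i]] by (simp add: C ip_smult_left[of _ n] ip_self)
  then show "cmod (ip (canonical_dual n N F i) (F i)) = (vnorm (F i))^2 / A"
    using A by (simp only: norm_of_real) simp
  show "vnorm (F i) * vnorm (canonical_dual n N F i) = (vnorm (F i))^2 / A"
    using A by (simp only: C vnorm_smult norm_of_real) (simp add: power2_eq_square)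
qed

section \<open>Duals\<close>

lemma sum_vec_cong: "(\<And>i. i < N \<Longrightarrow> u i = w i) \<Longrightarrow> sum_vec n N u = sum_vec n N w"
  by (induction N) auto

lemma is_frame_in_space: "is_frame K n N F \<Longrightarrow> i < N \<Longrightarrow> in_space K n (F i)"
  unfolding is_frame_def by simp

lemma reconstruction_norm_bound:
  assumes f: "f \<in> carrier_vec n" and F: "\<And>i. i < N \<Longrightarrow> F i \<in> carrier_vec n"
    and rec: "f = sum_vec n N (\<lambda>i. ip f (H i) \<cdot>\<^sub>v F i)"
  shows "(vnorm f)^2 \<le> sqrt (\<Sum>i<N. (cmod (ip f (H i)))^2) * sqrt (\<Sum>i<N. (cmod (ip f (F i)))^2)"
proof -
  have "ip f f = ip (sum_vec n N (\<lambda>i. ip f (H i) \<cdot>\<^sub>v F i)) f"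
    unfolding rec[symmetric] ..
  also have "\<dots> = (\<Sum>i<N. ip f (H i) * ip (F i) f)"
    using f F by (simp add: ip_sum_vec_left ip_smult_left[of _ n])
  finally have "cmod (ip f f) \<le> (\<Sum>i<N. cmod (ip f (H i)) * cmod (ip (F i) f))"
    using norm_sum[of "\<lambda>i. ip f (H i) * ip (F i) f" "{..<N}"] by (simp add: norm_mult)
  also have "\<dots> = (\<Sum>i<N. \<bar>cmod (ip f (H i))\<bar> * \<bar>cmod (ip f (F i))\<bar>)"
    using f F by (intro sum.cong refl) (simp add: ip_cnj_commute[of f n])
  also have "\<dots> \<le> sqrt (\<Sum>i<N. (cmod (ip f (H i)))^2) * sqrt (\<Sum>i<N. (cmod (ip f (F i)))^2)"
    using L2_set_mult_ineq[of "\<lambda>i. cmod (ip f (H i))" "\<lambda>i. cmod (ip f (F i))" "{..<N}"]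
    by (simp add: L2_set_def)
  finally show ?thesis using f by (simp add: ip_self del: of_real_power)
qed

lemma is_frame_of_reconstruction:
  assumes F: "is_frame K n N F" and H: "\<And>i. i < N \<Longrightarrow> in_space K n (H i)"
    and rec: "\<And>f. in_space K n f \<Longrightarrow> f = sum_vec n N (\<lambda>i. ip f (H i) \<cdot>\<^sub>v F i)"
  shows "is_frame K n N H"
proof -
  obtain B where B: "B > 0" and bessel: "\<And>f. in_space K n f \<Longrightarrow> (\<Sum>i<N. (cmod (ip f (F i)))^2) \<le> B * (vnorm f)^2"
    using F unfolding is_frame_def by blast
  have Fc: "\<And>i. i < N \<Longrightarrow> F i \<in> carrier_vec n" using F by (auto intro: in_space_carrier is_frame_in_space)
  have Hc: "\<And>i. i < N \<Longrightarrow> H i \<in> carrier_vec n" using H in_space_carrier by blast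
  have lower: "1 / B * (vnorm f)^2 \<le> (\<Sum>i<N. (cmod (ip f (H i)))^2)" if f: "in_space K n f" for f
  proof -
    define X where "X = (\<Sum>i<N. (cmod (ip f (H i)))^2)"
    have X0: "X \<ge> 0" unfolding X_def by (simp add: sum_nonneg)
    have "sqrt (\<Sum>i<N. (cmod (ip f (F i)))^2) \<le> sqrt (B * (vnorm f)^2)"
      using bessel[OF f] by (rule real_sqrt_le_mono)
    then have "sqrt X * sqrt (\<Sum>i<N. (cmod (ip f (F i)))^2) \<le> sqrt X * (sqrt B * vnorm f)"
      using X0 by (intro mult_left_mono) (simp_all add: real_sqrt_mult vnorm_nonneg)
    with reconstruction_norm_bound[OF in_space_carrier[OF f] Fc rec[OF f]]
    have "(vnorm f)^2 \<le> sqrt (X * B) * vnorm f" by (simp add: X_def real_sqrt_mult ac_simps)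
    then have "vnorm f \<le> sqrt (X * B)"
      using X0 B vnorm_nonneg[of f] by (cases "vnorm f = 0") (simp_all add: power2_eq_square)
    then have "(vnorm f)^2 \<le> X * B"
      using X0 B vnorm_nonneg[of f] by (metis mult_nonneg_nonneg power_mono real_sqrt_pow2 less_imp_le)
    then show ?thesis using B by (simp add: X_def field_simps)
  qed
  have upper: "(\<Sum>i<N. (cmod (ip f (H i)))^2) \<le> ((\<Sum>i<N. (vnorm (H i))^2) + 1) * (vnorm f)^2"
    if f: "in_space K n f" for f
  proof -
    have "(\<Sum>i<N. (cmod (ip f (H i)))^2) \<le> (\<Sum>i<N. (vnorm f * vnorm (H i))^2)"
      using ip_Cauchy_Schwarz in_space_carrier[OF f] Hc by (intro sum_mono power_mono) auto
    also have "\<dots> = (vnorm f)^2 * (\<Sum>i<N. (vnorm (H i))^2)"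
      by (simp add: power_mult_distrib sum_distrib_left)
    also have "\<dots> \<le> ((\<Sum>i<N. (vnorm (H i))^2) + 1) * (vnorm f)^2"
      by (simp add: algebra_simps)
    finally show ?thesis .
  qed
  have "1 / B > 0" "(\<Sum>i<N. (vnorm (H i))^2) + 1 > 0"
    using B sum_nonneg[of "{..<N}" "\<lambda>i. (vnorm (H i))^2"] by auto
  then show ?thesis
    unfolding is_frame_def using H lower upper by blast
qed

lemma is_dual_is_frame: "is_dual K n N F G \<Longrightarrow> is_frame K n N G"
  unfolding is_dual_def by (rule conjunct1)

lemma is_dual_reconstruction:
  assumes "is_dual K n N F G" "in_space K n f"
  shows "sum_vec n N (\<lambda>i. ip f (F i) \<cdot>\<^sub>v G i) = f" "sum_vec n N (\<lambda>i. ip f (G i) \<cdot>\<^sub>v F i) = f"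
proof -
  note reconstruction = conjunct2[OF assms(1)[unfolded is_dual_def], rule_format, OF assms(2)]
  show "sum_vec n N (\<lambda>i. ip f (F i) \<cdot>\<^sub>v G i) = f" using conjunct1[OF reconstruction] by (rule sym)
  show "sum_vec n N (\<lambda>i. ip f (G i) \<cdot>\<^sub>v F i) = f" using conjunct2[OF reconstruction] by (rule sym)
qed

lemma is_dual_affine_combination:
  assumes K: "K = \<real> \<or> K = UNIV" and F: "is_frame K n N F"
    and C: "is_dual K n N F C" and G: "is_dual K n N F G"
  shows "is_dual K n N F (\<lambda>i. of_real (1 - t) \<cdot>\<^sub>v C i + of_real t \<cdot>\<^sub>v G i)"
proof -
  define Gt where "Gt = (\<lambda>i. of_real (1 - t) \<cdot>\<^sub>v C i + of_real t \<cdot>\<^sub>v G i)"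
  have Cs: "\<And>i. i < N \<Longrightarrow> in_space K n (C i)" and Gs: "\<And>i. i < N \<Longrightarrow> in_space K n (G i)"
    using C G by (auto intro: is_frame_in_space is_dual_is_frame)
  have Fc: "\<And>i. i < N \<Longrightarrow> F i \<in> carrier_vec n"
    using F by (auto intro: in_space_carrier is_frame_in_space)
  have Cc: "\<And>i. i < N \<Longrightarrow> C i \<in> carrier_vec n" and Gc: "\<And>i. i < N \<Longrightarrow> G i \<in> carrier_vec n"
    using Cs Gs in_space_carrier by blast+
  have Gts: "\<And>i. i < N \<Longrightarrow> in_space K n (Gt i)"
    unfolding Gt_def by (intro in_space_add[OF K] in_space_smult_real[OF K] Cs Gs)
  have affine: "of_real (1 - t) \<cdot>\<^sub>v f + of_real t \<cdot>\<^sub>v f = f" for f :: "complex vec"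
    unfolding add_smult_distrib_vec[symmetric] by simp
  have analysis: "sum_vec n N (\<lambda>i. ip f (F i) \<cdot>\<^sub>v Gt i) = f" if f: "in_space K n f" for f
  proof -
    have "sum_vec n N (\<lambda>i. ip f (F i) \<cdot>\<^sub>v Gt i)
        = sum_vec n N (\<lambda>i. of_real (1 - t) \<cdot>\<^sub>v (ip f (F i) \<cdot>\<^sub>v C i) + of_real t \<cdot>\<^sub>v (ip f (F i) \<cdot>\<^sub>v G i))"
      using Cc Gc by (intro sum_vec_cong) (simp add: Gt_def smult_add_distrib_vec[of _ n] smult_smult_assoc mult.commute)
    also have "\<dots> = of_real (1 - t) \<cdot>\<^sub>v sum_vec n N (\<lambda>i. ip f (F i) \<cdot>\<^sub>v C i)
        + of_real t \<cdot>\<^sub>v sum_vec n N (\<lambda>i. ip f (F i) \<cdot>\<^sub>v G i)"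
      by (rule sum_vec_linear_comb) (use Cc Gc in auto)
    also have "\<dots> = f"
      by (simp only: is_dual_reconstruction[OF C f] is_dual_reconstruction[OF G f] affine)
    finally show ?thesis .
  qed
  have synthesis: "sum_vec n N (\<lambda>i. ip f (Gt i) \<cdot>\<^sub>v F i) = f" if f: "in_space K n f" for f
  proof -
    have "sum_vec n N (\<lambda>i. ip f (Gt i) \<cdot>\<^sub>v F i)
        = sum_vec n N (\<lambda>i. of_real (1 - t) \<cdot>\<^sub>v (ip f (C i) \<cdot>\<^sub>v F i) + of_real t \<cdot>\<^sub>v (ip f (G i) \<cdot>\<^sub>v F i))"
      using Cc Gc Fc
      by (intro sum_vec_cong) (simp add: Gt_def ip_add_right[of _ n] ip_smult_right[of _ n] add_smult_distrib_vec smult_smult_assoc)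
    also have "\<dots> = of_real (1 - t) \<cdot>\<^sub>v sum_vec n N (\<lambda>i. ip f (C i) \<cdot>\<^sub>v F i)
        + of_real t \<cdot>\<^sub>v sum_vec n N (\<lambda>i. ip f (G i) \<cdot>\<^sub>v F i)"
      by (rule sum_vec_linear_comb) (use Fc in auto)
    also have "\<dots> = f"
      by (simp only: is_dual_reconstruction[OF C f] is_dual_reconstruction[OF G f] affine)
    finally show ?thesis .
  qed
  have "is_frame K n N Gt"
  proof (rule is_frame_of_reconstruction[OF F Gts])
    fix f assume "in_space K n f"
    from synthesis[OF this] show "f = sum_vec n N (\<lambda>i. ip f (Gt i) \<cdot>\<^sub>v F i)" by (rule sym)
  qed
  then show ?thesis
    unfolding Gt_def[symmetric] is_dual_def using analysis synthesis by (intro conjI allI impI) simp_all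
qed

section \<open>Error operators\<close>

lemma prob_seq_nonempty: "prob_seq N p \<Longrightarrow> N > 0"
  unfolding prob_seq_def by (cases N) auto

lemma weight_nonneg:
  assumes "prob_seq N p" "i < N"
  shows "0 \<le> weight n N p i"
  using assms unfolding prob_seq_def weight_def by (auto intro!: mult_nonneg_nonneg divide_nonneg_nonneg)

lemma spectral_radius_err_op1:
  assumes "F i \<in> carrier_vec n" "G i \<in> carrier_vec n" "n > 0" "weight n N p i \<ge> 0"
  shows "spectral_radius (err_op1 n N p F G i) = weight n N p i * cmod (ip (G i) (F i))"
  using assms by (simp add: err_op1_def spectral_radius_rank_one norm_mult)

lemma op_norm_err_op1:
  assumes "K = \<real> \<or> K = UNIV" "in_space K n (F i)" "G i \<in> carrier_vec n" "weight n N p i \<ge> 0"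
  shows "op_norm K n (err_op1 n N p F G i) = weight n N p i * (vnorm (F i) * vnorm (G i))"
  using assms by (simp add: err_op1_def op_norm_rank_one)

lemma r1_eq_Max:
  assumes n: "n > 0" and p: "prob_seq N p"
    and F: "\<And>i. i < N \<Longrightarrow> F i \<in> carrier_vec n" and G: "\<And>i. i < N \<Longrightarrow> G i \<in> carrier_vec n"
  shows "r1 n N p F G = Max ((\<lambda>i. weight n N p i * cmod (ip (G i) (F i))) ` {..<N})"
  unfolding r1_def
proof (intro arg_cong[where f = Max] image_cong refl)
  fix i assume "i \<in> {..<N}"
  then have i: "i < N" by simp
  show "spectral_radius (err_op1 n N p F G i) = weight n N p i * cmod (ip (G i) (F i))"
    by (rule spectral_radius_err_op1[where F = F and G = G and i = i, OF F[OF i] G[OF i] n weight_nonneg[OF p i, of n]])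
qed

lemma A1_eq_Max:
  assumes K: "K = \<real> \<or> K = UNIV" and n: "n > 0" and p: "prob_seq N p"
    and F: "\<And>i. i < N \<Longrightarrow> in_space K n (F i)" and G: "\<And>i. i < N \<Longrightarrow> G i \<in> carrier_vec n"
  shows "A1 K n N p F G
    = Max ((\<lambda>i. weight n N p i * (vnorm (F i) * vnorm (G i) + cmod (ip (G i) (F i))) / 2) ` {..<N})"
  unfolding A1_def
proof (intro arg_cong[where f = Max] image_cong refl)
  fix i assume "i \<in> {..<N}"
  then have i: "i < N" by simp
  show "(op_norm K n (err_op1 n N p F G i) + spectral_radius (err_op1 n N p F G i)) / 2
      = weight n N p i * (vnorm (F i) * vnorm (G i) + cmod (ip (G i) (F i))) / 2"
    using op_norm_err_op1[where F = F and G = G and i = i, OF K F[OF i] G[OF i] weight_nonneg[OF p i, of n]]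
      spectral_radius_err_op1[where F = F and G = G and i = i, OF in_space_carrier[OF F[OF i]] G[OF i] n weight_nonneg[OF p i, of n]]
    by (simp add: distrib_left)
qed

lemma Max_image_mono:
  fixes f g :: "'a \<Rightarrow> 'b :: linorder"
  assumes "finite I" "I \<noteq> {}" "\<And>i. i \<in> I \<Longrightarrow> f i \<le> g i"
  shows "Max (f ` I) \<le> Max (g ` I)"
  using assms by (subst Max_le_iff) (auto intro: order_trans[OF _ Max_ge])

lemma r1_le_A1:
  assumes K: "K = \<real> \<or> K = UNIV" and n: "n > 0" and p: "prob_seq N p"
    and F: "\<And>i. i < N \<Longrightarrow> in_space K n (F i)" and G: "\<And>i. i < N \<Longrightarrow> G i \<in> carrier_vec n"
  shows "r1 n N p F G \<le> A1 K n N p F G"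
proof -
  have termwise: "weight n N p i * cmod (ip (G i) (F i))
      \<le> weight n N p i * (vnorm (F i) * vnorm (G i) + cmod (ip (G i) (F i))) / 2" if i: "i < N" for i
  proof -
    have "cmod (ip (G i) (F i)) \<le> vnorm (F i) * vnorm (G i)"
      using ip_Cauchy_Schwarz[OF G[OF i] in_space_carrier[OF F[OF i]]] by (simp add: mult.commute)
    then have "weight n N p i * cmod (ip (G i) (F i)) \<le> weight n N p i * (vnorm (F i) * vnorm (G i))"
      by (rule mult_left_mono) (rule weight_nonneg[OF p i, of n])
    then show ?thesis by (simp add: distrib_left field_simps)
  qed
  have "N > 0" using p by (rule prob_seq_nonempty)
  then have "Max ((\<lambda>i. weight n N p i * cmod (ip (G i) (F i))) ` {..<N})
      \<le> Max ((\<lambda>i. weight n N p i * (vnorm (F i) * vnorm (G i) + cmod (ip (G i) (F i))) / 2) ` {..<N})"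
    using termwise by (intro Max_image_mono) auto
  moreover have "\<And>i. i < N \<Longrightarrow> F i \<in> carrier_vec n" using F by (rule in_space_carrier)
  ultimately show ?thesis using r1_eq_Max[OF n p _ G] A1_eq_Max[OF K n p F G] by simp
qed

section \<open>Moving from the canonical dual towards another dual\<close>

lemma exists_small_step:
  fixes k L :: "'i \<Rightarrow> real"
  assumes "finite I" "\<And>i. i \<in> I \<Longrightarrow> 0 < L i"
  shows "\<exists>t. 0 < t \<and> t \<le> 1 \<and> (\<forall>i\<in>I. t * k i < L i)"
proof -
  have "\<forall>i\<in>I. eventually (\<lambda>t. t * k i < L i) (at_right 0)"
  proof
    fix i assume "i \<in> I"
    have "((\<lambda>t. t * k i) \<longlongrightarrow> 0 * k i) (at_right 0)" by (intro tendsto_intros)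
    then show "eventually (\<lambda>t. t * k i < L i) (at_right 0)"
      using assms(2)[OF \<open>i \<in> I\<close>] by (intro order_tendstoD(2)) auto
  qed
  then have "eventually (\<lambda>t. \<forall>i\<in>I. t * k i < L i) (at_right 0)"
    by (rule eventually_ball_finite[OF assms(1)])
  moreover have "eventually (\<lambda>t. 0 < t) (at_right (0 :: real))" by (rule eventually_at_right_less)
  moreover have "eventually (\<lambda>t. t < 1) (at_right (0 :: real))"
    by (rule order_tendstoD(2)[OF tendsto_ident_at]) simp
  ultimately have "eventually (\<lambda>t. 0 < t \<and> t \<le> 1 \<and> (\<forall>i\<in>I. t * k i < L i)) (at_right 0)"
    by eventually_elim auto
  then show ?thesis by (rule eventually_happens'[OF trivial_limit_at_right_real])
qed

text \<open>The scalar core of the perturbation: \<open>P\<close> and \<open>R\<close> stand for \<open>\<parallel>f\<^sub>i\<parallel> \<parallel>g\<^sub>i(t)\<parallel>\<close> and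
  \<open>|\<langle>g\<^sub>i(t), f\<^sub>i\<rangle>|\<close>, \<open>a\<close> and \<open>b\<close> for \<open>|\<langle>g\<^sub>i, f\<^sub>i\<rangle>|\<close> at the canonical dual and at the competing dual.\<close>
lemma perturbed_mean_less:
  fixes q M a b c t P R :: real
  assumes q: "0 \<le> q" and b: "0 \<le> b" and qa: "q * a \<le> M" and qb: "q * b < M"
    and t: "0 < t" "t \<le> 1" and P: "0 \<le> P"
    and R: "R \<le> (1 - t) * a + t * b"
    and P2: "P^2 \<le> ((1 - t) * a + t * b)^2 + t^2 * c"
    and small: "t * q^2 * c < 4 * M * (M - q * b)"
  shows "q * (P + R) / 2 < M"
proof -
  have M0: "0 < M" using mult_nonneg_nonneg[OF q b] qb by linarith
  define Y where "Y = q * ((1 - t) * a + t * b)"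
  have gap: "t * (M - q * b) \<le> M - Y"
  proof -
    have "M - Y = (1 - t) * (M - q * a) + t * (M - q * b)" unfolding Y_def by (simp add: algebra_simps)
    moreover have "(1 - t) * (M - q * a) \<ge> 0" using t qa by simp
    ultimately show ?thesis by simp
  qed
  moreover have "0 < t * (M - q * b)" using t qb by simp
  ultimately have YM: "Y < M" by linarith
  have "q * R \<le> Y" unfolding Y_def using R q by (rule mult_left_mono)
  have "(q * P)^2 \<le> Y^2 + t * (t * q^2 * c)"
    using mult_left_mono[OF P2, of "q^2"] by (simp add: Y_def power_mult_distrib algebra_simps power2_eq_square)
  also have "\<dots> < Y^2 + 4 * M * (t * (M - q * b))"
    using mult_strict_left_mono[OF small t(1)] by (simp add: algebra_simps)
  also have "\<dots> \<le> Y^2 + 4 * M * (M - Y)"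
    using mult_left_mono[OF gap, of "4 * M"] M0 by simp
  also have "\<dots> = (2 * M - Y)^2" by (simp add: algebra_simps power2_eq_square)
  finally have "q * P < 2 * M - Y"
    by (rule power2_less_imp_less) (use YM M0 in linarith)
  with \<open>q * R \<le> Y\<close> show ?thesis by (simp add: distrib_left)
qed

lemma affine_perturbation_bounds:
  assumes f: "f \<in> carrier_vec n" and g: "g \<in> carrier_vec n" and s: "0 \<le> s" and t: "0 \<le> t" "t \<le> 1"
    and y: "y = of_real (1 - t) \<cdot>\<^sub>v (of_real s \<cdot>\<^sub>v f) + of_real t \<cdot>\<^sub>v g"
  shows "cmod (ip y f) \<le> (1 - t) * (s * (vnorm f)^2) + t * cmod (ip g f)"
    and "(vnorm f * vnorm y)^2 \<le> ((1 - t) * (s * (vnorm f)^2) + t * cmod (ip g f))^2 + t^2 * (vnorm f * vnorm g)^2"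
proof -
  define a where "a = s * (vnorm f)^2"
  define b where "b = cmod (ip g f)"
  define u where "u = of_real ((1 - t) * s) \<cdot>\<^sub>v f"
  define w where "w = of_real t \<cdot>\<^sub>v g"
  have uw: "u \<in> carrier_vec n" "w \<in> carrier_vec n" using f g by (auto simp: u_def w_def)
  have y_uw: "y = u + w" unfolding y u_def w_def by (simp add: smult_smult_assoc)
  have "ip y f = of_real ((1 - t) * a) + of_real t * ip g f"
    using f g uw by (simp add: y_uw u_def w_def a_def ip_add_left[of _ n] ip_smult_left[of _ n] ip_self)
  then have "cmod (ip y f) \<le> cmod (of_real ((1 - t) * a)) + cmod (of_real t * ip g f)"
    by (simp only: norm_triangle_ineq)
  also have "\<dots> = (1 - t) * a + t * b"
    using t s by (simp only: norm_of_real norm_mult) (simp add: a_def b_def)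
  finally show "cmod (ip y f) \<le> (1 - t) * (s * (vnorm f)^2) + t * cmod (ip g f)"
    unfolding a_def b_def .
  have "Re (ip u w) = (1 - t) * s * t * Re (ip f g)"
    using f g by (simp add: u_def w_def ip_smult_left[of _ n] ip_smult_right[of _ n])
  also have "\<dots> \<le> (1 - t) * s * t * b"
    using t s complex_Re_le_cmod[of "ip f g"] ip_cnj_commute[OF f g]
    by (intro mult_left_mono) (auto simp: b_def)
  finally have Re_uw: "Re (ip u w) \<le> (1 - t) * s * t * b" .
  have "(vnorm u)^2 = ((1 - t) * s)^2 * (vnorm f)^2"
    unfolding u_def vnorm_smult norm_of_real using t s by (simp add: power_mult_distrib)
  moreover have "(vnorm w)^2 = t^2 * (vnorm g)^2"
    unfolding w_def vnorm_smult norm_of_real using t by (simp add: power_mult_distrib)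
  ultimately have "(vnorm y)^2 = ((1 - t) * s)^2 * (vnorm f)^2 + 2 * Re (ip u w) + t^2 * (vnorm g)^2"
    unfolding y_uw vnorm_add_power2[OF uw] by simp
  then have "(vnorm f * vnorm y)^2
      \<le> (vnorm f)^2 * (((1 - t) * s)^2 * (vnorm f)^2 + 2 * ((1 - t) * s * t * b) + t^2 * (vnorm g)^2)"
    using Re_uw by (simp add: power_mult_distrib mult_left_mono)
  also have "\<dots> = ((1 - t) * a)^2 + 2 * ((1 - t) * a) * (t * b) + t^2 * (vnorm f * vnorm g)^2"
    by (simp add: a_def power2_eq_square algebra_simps)
  also have "\<dots> \<le> ((1 - t) * a + t * b)^2 + t^2 * (vnorm f * vnorm g)^2"
    by (simp add: power2_sum)
  finally show "(vnorm f * vnorm y)^2 \<le> ((1 - t) * (s * (vnorm f)^2) + t * cmod (ip g f))^2 + t^2 * (vnorm f * vnorm g)^2"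
    unfolding a_def b_def .
qed

lemma weight_ip_le_r1:
  assumes n: "n > 0" and p: "prob_seq N p"
    and F: "\<And>i. i < N \<Longrightarrow> F i \<in> carrier_vec n" and G: "\<And>i. i < N \<Longrightarrow> G i \<in> carrier_vec n"
    and i: "i < N"
  shows "weight n N p i * cmod (ip (G i) (F i)) \<le> r1 n N p F G"
proof -
  have "weight n N p i * cmod (ip (G i) (F i)) \<le> Max ((\<lambda>i. weight n N p i * cmod (ip (G i) (F i))) ` {..<N})"
    using i by (intro Max_ge) auto
  also have "\<dots> = r1 n N p F G" using r1_eq_Max[OF n p F G] by simp
  finally show ?thesis .
qed

lemma A1_less:
  assumes K: "K = \<real> \<or> K = UNIV" and n: "n > 0" and p: "prob_seq N p"
    and F: "\<And>i. i < N \<Longrightarrow> in_space K n (F i)" and G: "\<And>i. i < N \<Longrightarrow> G i \<in> carrier_vec n"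
    and less: "\<And>i. i < N \<Longrightarrow> weight n N p i * (vnorm (F i) * vnorm (G i) + cmod (ip (G i) (F i))) / 2 < M"
  shows "A1 K n N p F G < M"
proof -
  have "N > 0" using p by (rule prob_seq_nonempty)
  then have "Max ((\<lambda>i. weight n N p i * (vnorm (F i) * vnorm (G i) + cmod (ip (G i) (F i))) / 2) ` {..<N}) < M"
    using less by (subst Max_less_iff) auto
  then show ?thesis using A1_eq_Max[OF K n p F G] by simp
qed

lemma A1_eq_r1_canonical_dual:
  assumes K: "K = \<real> \<or> K = UNIV" and n: "n > 0" and p: "prob_seq N p"
    and tight_frame: "is_tight_frame K n N F"
  shows "A1 K n N p F (canonical_dual n N F) = r1 n N p F (canonical_dual n N F)"
proof -
  obtain A where A: "A > 0" and F: "\<And>i. i < N \<Longrightarrow> in_space K n (F i)"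
    and tight: "\<And>f. in_space K n f \<Longrightarrow> (\<Sum>i<N. (cmod (ip f (F i)))^2) = A * (vnorm f)^2"
    using tight_frame by (rule is_tight_frameE) blast
  have Fc: "\<And>i. i < N \<Longrightarrow> F i \<in> carrier_vec n" using F by (rule in_space_carrier)
  have Cc: "\<And>i. i < N \<Longrightarrow> canonical_dual n N F i \<in> carrier_vec n"
    using K F tight A Fc by (subst tight_frame_canonical_dual) auto
  note norms = tight_frame_canonical_dual_norms[OF K F tight A]
  have "A1 K n N p F (canonical_dual n N F)
      = Max ((\<lambda>i. weight n N p i * cmod (ip (canonical_dual n N F i) (F i))) ` {..<N})"
    using norms by (simp add: A1_eq_Max[OF K n p F Cc])
  also have "\<dots> = r1 n N p F (canonical_dual n N F)" using r1_eq_Max[OF n p Fc Cc] by simp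
  finally show ?thesis .
qed

lemma canonical_perturbation_term_less:
  fixes q M s t :: real
  assumes f: "f \<in> carrier_vec n" and g: "g \<in> carrier_vec n" and q: "0 \<le> q" and s: "0 \<le> s"
    and qa: "q * (s * (vnorm f)^2) \<le> M" and qb: "q * cmod (ip g f) < M" and t: "0 < t" "t \<le> 1"
    and small: "t * (q^2 * (vnorm f * vnorm g)^2) < 4 * M * (M - q * cmod (ip g f))"
    and y: "y = of_real (1 - t) \<cdot>\<^sub>v (of_real s \<cdot>\<^sub>v f) + of_real t \<cdot>\<^sub>v g"
  shows "q * (vnorm f * vnorm y + cmod (ip y f)) / 2 < M"
proof (rule perturbed_mean_less[OF q norm_ge_zero qa qb t])
  note bounds = affine_perturbation_bounds[OF f g s less_imp_le[OF t(1)] t(2) y]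
  show "0 \<le> vnorm f * vnorm y" by (simp add: vnorm_nonneg)
  show "cmod (ip y f) \<le> (1 - t) * (s * (vnorm f)^2) + t * cmod (ip g f)" by (rule bounds(1))
  show "(vnorm f * vnorm y)^2 \<le> ((1 - t) * (s * (vnorm f)^2) + t * cmod (ip g f))^2 + t^2 * (vnorm f * vnorm g)^2"
    by (rule bounds(2))
  show "t * q^2 * (vnorm f * vnorm g)^2 < 4 * M * (M - q * cmod (ip g f))"
    using small by (simp add: mult.assoc)
qed

lemma exists_dual_A1_less:
  assumes K: "K = \<real> \<or> K = UNIV" and n: "n > 0" and p: "prob_seq N p"
    and tight_frame: "is_tight_frame K n N F"
    and C: "is_dual K n N F (canonical_dual n N F)" and G: "is_dual K n N F G"
    and less: "r1 n N p F G < r1 n N p F (canonical_dual n N F)"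
  shows "\<exists>G'. is_dual K n N F G' \<and> A1 K n N p F G' < A1 K n N p F (canonical_dual n N F)"
proof -
  obtain A where A: "A > 0" and F: "\<And>i. i < N \<Longrightarrow> in_space K n (F i)"
    and tight: "\<And>f. in_space K n f \<Longrightarrow> (\<Sum>i<N. (cmod (ip f (F i)))^2) = A * (vnorm f)^2"
    using tight_frame by (rule is_tight_frameE) blast
  define q where "q = weight n N p"
  define M where "M = r1 n N p F (canonical_dual n N F)"
  have Fc: "\<And>i. i < N \<Longrightarrow> F i \<in> carrier_vec n" using F by (rule in_space_carrier)
  have Gc: "\<And>i. i < N \<Longrightarrow> G i \<in> carrier_vec n" and Cc: "\<And>i. i < N \<Longrightarrow> canonical_dual n N F i \<in> carrier_vec n"
    using G C by (auto intro: in_space_carrier is_frame_in_space is_dual_is_frame)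
  have q0: "\<And>i. i < N \<Longrightarrow> 0 \<le> q i" unfolding q_def using p by (rule weight_nonneg)
  have canonical_term: "q i * (1 / A * (vnorm (F i))^2) \<le> M" if "i < N" for i
    using weight_ip_le_r1[where F = F and G = "canonical_dual n N F", OF n p Fc Cc that] tight_frame_canonical_dual_norms(1)[OF K F tight A that]
    by (simp add: q_def M_def)
  have dual_term: "q i * cmod (ip (G i) (F i)) < M" if "i < N" for i
    using weight_ip_le_r1[where F = F and G = G, OF n p Fc Gc that] less by (simp add: q_def M_def)
  have "0 < M" using dual_term q0 prob_seq_nonempty[OF p] by (meson norm_ge_zero mult_nonneg_nonneg le_less_trans)
  then obtain t where t: "0 < t" "t \<le> 1"
    and small: "\<forall>i\<in>{..<N}. t * ((q i)^2 * (vnorm (F i) * vnorm (G i))^2) < 4 * M * (M - q i * cmod (ip (G i) (F i)))"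
    using dual_term exists_small_step[where I = "{..<N}" and L = "\<lambda>i. 4 * M * (M - q i * cmod (ip (G i) (F i)))"
        and k = "\<lambda>i. (q i)^2 * (vnorm (F i) * vnorm (G i))^2"] by auto
  define Gt where "Gt = (\<lambda>i. of_real (1 - t) \<cdot>\<^sub>v canonical_dual n N F i + of_real t \<cdot>\<^sub>v G i)"
  have "is_dual K n N F Gt"
    unfolding Gt_def using K tight_frame_is_frame[OF tight_frame] C G by (rule is_dual_affine_combination)
  moreover have "A1 K n N p F Gt < M"
  proof (rule A1_less[OF K n p F])
    show "\<And>i. i < N \<Longrightarrow> Gt i \<in> carrier_vec n" using Gc Cc by (simp add: Gt_def)
    fix i assume i: "i < N"
    show "weight n N p i * (vnorm (F i) * vnorm (Gt i) + cmod (ip (Gt i) (F i))) / 2 < M"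
      unfolding q_def[symmetric]
    proof (rule canonical_perturbation_term_less[OF Fc[OF i] Gc[OF i] q0[OF i] _ canonical_term[OF i] dual_term[OF i] t])
      show "0 \<le> 1 / A" using A by simp
      show "t * ((q i)^2 * (vnorm (F i) * vnorm (G i))^2) < 4 * M * (M - q i * cmod (ip (G i) (F i)))"
        using small i by simp
      show "Gt i = of_real (1 - t) \<cdot>\<^sub>v (of_real (1 / A) \<cdot>\<^sub>v F i) + of_real t \<cdot>\<^sub>v G i"
        using tight_frame_canonical_dual[OF K F tight _ i] A by (simp add: Gt_def)
    qed
  qed
  moreover have "M = A1 K n N p F (canonical_dual n N F)"
    unfolding M_def by (rule A1_eq_r1_canonical_dual[OF K n p tight_frame, symmetric])
  ultimately show ?thesis by auto
qed

theorem theorem3p5: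
  fixes K :: "complex set" and n N :: nat
    and F :: "nat \<Rightarrow> complex vec" and p :: "nat \<Rightarrow> real"
  assumes "K = \<real> \<or> K = UNIV"
    and "n > 0"
    and "is_tight_frame K n N F"
    and "prob_seq N p"
  shows "is_PSOD1 K n N p F (canonical_dual n N F)
     \<longleftrightarrow> canonical_dual n N F \<in> Delta1 K n N p F"
proof -
  note K = assms(1) and n = assms(2) and tight_frame = assms(3) and p = assms(4)
  have F: "\<And>i. i < N \<Longrightarrow> in_space K n (F i)" using tight_frame unfolding is_tight_frame_def by blast
  have r1_le_A1_dual: "r1 n N p F G \<le> A1 K n N p F G" if "is_dual K n N F G" for G
    using K n p F that by (intro r1_le_A1) (auto intro: in_space_carrier is_frame_in_space is_dual_is_frame)
  note A1_eq_r1 = A1_eq_r1_canonical_dual[OF K n p tight_frame]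
  show ?thesis
  proof
    assume "is_PSOD1 K n N p F (canonical_dual n N F)"
    then have C: "is_dual K n N F (canonical_dual n N F)"
      and r1_min: "\<And>G. is_dual K n N F G \<Longrightarrow> r1 n N p F (canonical_dual n N F) \<le> r1 n N p F G"
      unfolding is_PSOD1_def by auto
    have "A1 K n N p F (canonical_dual n N F) \<le> A1 K n N p F G" if "is_dual K n N F G" for G
      using r1_min[OF that] r1_le_A1_dual[OF that] by (simp add: A1_eq_r1)
    then show "canonical_dual n N F \<in> Delta1 K n N p F" unfolding Delta1_def using C by simp
  next
    assume "canonical_dual n N F \<in> Delta1 K n N p F"
    then have C: "is_dual K n N F (canonical_dual n N F)"
      and A1_min: "\<And>G. is_dual K n N F G \<Longrightarrow> A1 K n N p F (canonical_dual n N F) \<le> A1 K n N p F G"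
      unfolding Delta1_def by auto
    have "r1 n N p F (canonical_dual n N F) \<le> r1 n N p F G" if "is_dual K n N F G" for G
      using exists_dual_A1_less[OF K n p tight_frame C that] A1_min by (meson not_le)
    then show "is_PSOD1 K n N p F (canonical_dual n N F)" unfolding is_PSOD1_def using C by simp
  qed
qed

end
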